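(* Let $(X,b)$ be a locally finite weighted graph, $V\colon X\to\mathbb R$, and $x\in X$. The following are equivalent: (i) $\mathcal L_V$ satisfies the maximum principle at $x$; (ii) $V(x)\ge0$ or $V(x)+2\deg(x)\le0$.
   Context: Weighted graph: $X$ countable, $b\colon X\times X\to[0,\infty)$ with $b(x,x)=0$, $b(x,y)=b(y,x)$, $\deg(x)=\sum_y b(x,y)<\infty$; locally finite means each vertex has finitely many $y$ with $b(x,y)>0$. $C(X)$ is the space of complex functions on $X$, and $\mathcal L_Vf(x)=\sum_y b(x,y)(f(x)-f(y))+V(x)f(x)$ for $f\in C(X)$. $B_n(x)$ is the set of vertices at combinatorial distance at most $n$ from $x$ (distance = length of a shortest path $x=x_1,\dots,x_k=y$ with $b(x_i,x_{i+1})>0$, length $k-1$). A continuous operator $A$ on $C(X)$ satisfies the maximum principle at $x$ if there exists $n\in\mathbb N$ such that for every $f\in C(X)$, $Af(x)=0$ and $|f(x)|=\sup_{y\in B_n(x)}|f(y)|$ imply $|f(x)|=|f(y)|$ for all $y\in B_n(x)$. *)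

theory Defs
  imports "HOL-Analysis.Analysis"
begin

definition weighted_graph :: "('a::countable \<Rightarrow> 'a \<Rightarrow> real) \<Rightarrow> bool" where
  "weighted_graph b \<longleftrightarrow>
     (\<forall>x y. 0 \<le> b x y) \<and> (\<forall>x. b x x = 0) \<and> (\<forall>x y. b x y = b y x) \<and>
     (\<forall>x. (\<lambda>y. b x y) summable_on UNIV)"

definition locally_finite_graph :: "('a \<Rightarrow> 'a \<Rightarrow> real) \<Rightarrow> bool" where
  "locally_finite_graph b \<longleftrightarrow> (\<forall>x. finite {y. b x y > 0})"

definition deg :: "('a \<Rightarrow> 'a \<Rightarrow> real) \<Rightarrow> 'a \<Rightarrow> real" where
  "deg b x = (\<Sum>\<^sub>\<infinity>y. b x y)"

definition schr_op :: "('a \<Rightarrow> 'a \<Rightarrow> real) \<Rightarrow> ('a \<Rightarrow> real) \<Rightarrow> ('a \<Rightarrow> complex) \<Rightarrow> 'a \<Rightarrow> complex" where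
  "schr_op b V f x = (\<Sum>\<^sub>\<infinity>y. complex_of_real (b x y) * (f x - f y)) + complex_of_real (V x) * f x"

definition comb_ball :: "('a \<Rightarrow> 'a \<Rightarrow> real) \<Rightarrow> nat \<Rightarrow> 'a \<Rightarrow> 'a set" where
  "comb_ball b n x = {y. \<exists>k\<le>n. (x, y) \<in> {(u, v). b u v > 0} ^^ k}"

definition max_principle_at :: "('a \<Rightarrow> 'a \<Rightarrow> real) \<Rightarrow> (('a \<Rightarrow> complex) \<Rightarrow> 'a \<Rightarrow> complex) \<Rightarrow> 'a \<Rightarrow> bool" where
  "max_principle_at b A x \<longleftrightarrow>
     (\<exists>n::nat. n \<ge> 1 \<and>
       (\<forall>f. A f x = 0 \<and> cmod (f x) = (SUP y\<in>comb_ball b n x. cmod (f y))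
            \<longrightarrow> (\<forall>y\<in>comb_ball b n x. cmod (f x) = cmod (f y))))"

end

theory Submission
  imports Defs
begin

text \<open>Only the neighbours of x enter, so B_1(x) suffices. Writing D = deg x, the equation
  L_V f(x) = 0 reads (D + V(x)) f(x) = \<Sum>_y b(x,y) f(y). If |D + V(x)| \<ge> D, which is
  exactly condition (ii), the triangle inequality forces |f(y)| = |f(x)| at every neighbour
  once |f(x)| is maximal. Otherwise t = (D + V(x)) / D lies in (-1, 1), and the function
  equal to 1 at x and t elsewhere solves L_V f(x) = 0 with a strict maximum at x.\<close>

lemma weighted_graph_nonneg: "weighted_graph b \<Longrightarrow> 0 \<le> b x y"
  unfolding weighted_graph_def by blast

lemma weighted_graph_no_loop: "weighted_graph b \<Longrightarrow> b x x = 0"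
  unfolding weighted_graph_def by blast

lemma locally_finite_graph_finite_neighbours:
  "locally_finite_graph b \<Longrightarrow> finite {y. b x y > 0}"
  unfolding locally_finite_graph_def by blast

lemma infsum_eq_sum_neighbours:
  fixes b :: "'a::countable \<Rightarrow> 'a \<Rightarrow> real" and g :: "'a \<Rightarrow> 'b::{topological_comm_monoid_add, t2_space}"
  assumes "weighted_graph b" "locally_finite_graph b"
    and "\<And>y. b x y = 0 \<Longrightarrow> g y = 0"
  shows "(\<Sum>\<^sub>\<infinity>y. g y) = (\<Sum>y | b x y > 0. g y)"
proof -
  have "(\<Sum>\<^sub>\<infinity>y. g y) = (\<Sum>\<^sub>\<infinity>y\<in>{y. b x y > 0}. g y)"
    by (rule infsum_cong_neutral)
      (use assms(3) weighted_graph_nonneg[OF assms(1), of x] in \<open>auto simp: order_le_less\<close>)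
  then show ?thesis
    using locally_finite_graph_finite_neighbours[OF assms(2)] by simp
qed

lemma deg_eq_sum_neighbours:
  assumes "weighted_graph b" "locally_finite_graph b"
  shows "deg b x = (\<Sum>y | b x y > 0. b x y)"
  unfolding deg_def by (rule infsum_eq_sum_neighbours[OF assms]) simp

lemma schr_op_eq_sum_neighbours:
  assumes "weighted_graph b" "locally_finite_graph b"
  shows "schr_op b V f x =
    (\<Sum>y | b x y > 0. complex_of_real (b x y) * (f x - f y)) + complex_of_real (V x) * f x"
  unfolding schr_op_def by (subst infsum_eq_sum_neighbours[OF assms]) auto

lemma comb_ball_1: "comb_ball b 1 x = insert x {y. b x y > 0}"
proof (rule set_eqI)
  fix y
  define E where "E = {(u, v). b u v > 0}"
  have le_1: "k \<le> 1 \<longleftrightarrow> k = 0 \<or> k = 1" for k :: nat by auto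
  have "y \<in> comb_ball b 1 x \<longleftrightarrow> (x, y) \<in> E ^^ 0 \<or> (x, y) \<in> E ^^ 1"
    unfolding comb_ball_def mem_Collect_eq le_1 E_def by blast
  also have "\<dots> \<longleftrightarrow> y = x \<or> b x y > 0"
    unfolding E_def by (simp only: relpow.simps(1) relpow_1) blast
  finally show "y \<in> comb_ball b 1 x \<longleftrightarrow> y \<in> insert x {y. b x y > 0}" by blast
qed

lemma center_in_comb_ball: "x \<in> comb_ball b n x"
  unfolding comb_ball_def by (intro CollectI exI[of _ 0]) auto

lemma neighbour_in_comb_ball: "n \<ge> 1 \<Longrightarrow> b x y > 0 \<Longrightarrow> y \<in> comb_ball b n x"
  unfolding comb_ball_def by (intro CollectI exI[of _ 1]) auto

lemma weighted_sum_norm_eq_max: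
  fixes g :: "'a \<Rightarrow> 'b::real_normed_vector"
  assumes "finite N" and w_nonneg: "\<And>y. y \<in> N \<Longrightarrow> 0 \<le> w y"
    and w_le: "(\<Sum>y\<in>N. w y) \<le> \<bar>c\<bar>"
    and balance: "c *\<^sub>R v = (\<Sum>y\<in>N. w y *\<^sub>R g y)"
    and dominated: "\<And>y. y \<in> N \<Longrightarrow> norm (g y) \<le> norm v"
    and "y \<in> N" "w y > 0"
  shows "norm (g y) = norm v"
proof -
  have "(\<Sum>z\<in>N. w z) * norm v \<le> \<bar>c\<bar> * norm v"
    using w_le by (simp add: mult_right_mono)
  also have "\<dots> = norm (\<Sum>z\<in>N. w z *\<^sub>R g z)"
    by (simp flip: balance)
  also have "\<dots> \<le> (\<Sum>z\<in>N. w z * norm (g z))"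
    by (rule order_trans[OF norm_sum]) (simp add: w_nonneg)
  finally have le: "(\<Sum>z\<in>N. w z) * norm v \<le> (\<Sum>z\<in>N. w z * norm (g z))" .
  have gap_nonneg: "0 \<le> w z * (norm v - norm (g z))" if "z \<in> N" for z
    using w_nonneg[OF that] dominated[OF that] by simp
  have "(\<Sum>z\<in>N. w z * (norm v - norm (g z))) =
      (\<Sum>z\<in>N. w z) * norm v - (\<Sum>z\<in>N. w z * norm (g z))"
    by (simp add: right_diff_distrib sum_subtractf sum_distrib_right)
  moreover have "0 \<le> (\<Sum>z\<in>N. w z * (norm v - norm (g z)))"
    using gap_nonneg by (rule sum_nonneg)
  ultimately have "(\<Sum>z\<in>N. w z * (norm v - norm (g z))) = 0"
    using le by linarith
  then have "w y * (norm v - norm (g y)) = 0"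
    using \<open>finite N\<close> gap_nonneg \<open>y \<in> N\<close> by (simp add: sum_nonneg_eq_0_iff)
  with \<open>w y > 0\<close> show ?thesis by simp
qed

lemma max_principle_at_schr_op_if:
  assumes wg: "weighted_graph b" and lf: "locally_finite_graph b"
    and V_cond: "V x \<ge> 0 \<or> V x + 2 * deg b x \<le> 0"
  shows "max_principle_at b (schr_op b V) x"
  unfolding max_principle_at_def
proof (intro exI[of _ 1] conjI allI impI ballI)
  fix f y
  assume "schr_op b V f x = 0 \<and> cmod (f x) = (SUP y\<in>comb_ball b 1 x. cmod (f y))"
  then have harmonic: "schr_op b V f x = 0"
    and max: "cmod (f x) = (SUP y\<in>comb_ball b 1 x. cmod (f y))" by auto
  assume "y \<in> comb_ball b 1 x"
  define N where "N = {y. b x y > 0}"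
  have "finite N"
    unfolding N_def using locally_finite_graph_finite_neighbours[OF lf] .
  have deg: "deg b x = (\<Sum>y\<in>N. b x y)"
    unfolding N_def using deg_eq_sum_neighbours[OF wg lf] .
  have "complex_of_real (deg b x + V x) * f x = (\<Sum>y\<in>N. complex_of_real (b x y) * f y)"
    using harmonic unfolding schr_op_eq_sum_neighbours[OF wg lf] deg N_def
    by (simp add: algebra_simps sum_subtractf sum_distrib_left)
  then have balance: "(deg b x + V x) *\<^sub>R f x = (\<Sum>y\<in>N. b x y *\<^sub>R f y)"
    by (simp add: scaleR_conv_of_real)
  have "deg b x \<ge> 0"
    unfolding deg by (simp add: sum_nonneg weighted_graph_nonneg[OF wg])
  then have deg_le: "(\<Sum>y\<in>N. b x y) \<le> \<bar>deg b x + V x\<bar>"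
    using V_cond unfolding deg by linarith
  have ball: "comb_ball b 1 x = insert x N"
    unfolding comb_ball_1 N_def ..
  have dominated: "cmod (f z) \<le> cmod (f x)" if "z \<in> N" for z
    unfolding max ball using that \<open>finite N\<close> by (intro cSUP_upper) auto
  show "cmod (f x) = cmod (f y)"
  proof (cases "y = x")
    case False
    with \<open>y \<in> comb_ball b 1 x\<close> have "y \<in> N" "b x y > 0"
      unfolding ball by (auto simp: N_def)
    then show ?thesis
      using weighted_sum_norm_eq_max[OF \<open>finite N\<close> _ deg_le balance dominated]
        weighted_graph_nonneg[OF wg] by metis
  qed simp
qed simp

lemma schr_op_bump:
  assumes wg: "weighted_graph b" and lf: "locally_finite_graph b"
  shows "schr_op b V (\<lambda>z. if z = x then 1 else complex_of_real t) x =
    complex_of_real (deg b x * (1 - t) + V x)"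
proof -
  have "x \<notin> {y. b x y > 0}"
    using weighted_graph_no_loop[OF wg] by simp
  then show ?thesis
    unfolding schr_op_eq_sum_neighbours[OF wg lf] deg_eq_sum_neighbours[OF wg lf]
    by (auto simp: sum_distrib_right intro!: sum.cong)
qed

lemma max_principle_at_schr_op_only_if:
  assumes wg: "weighted_graph b" and lf: "locally_finite_graph b"
    and mp: "max_principle_at b (schr_op b V) x"
  shows "V x \<ge> 0 \<or> V x + 2 * deg b x \<le> 0"
proof (rule ccontr)
  assume "\<not> ?thesis"
  then have V_neg: "V x < 0" and V_gt: "V x + 2 * deg b x > 0" by auto
  then have deg_pos: "deg b x > 0" by linarith
  then have "{y. b x y > 0} \<noteq> {}"
    unfolding deg_eq_sum_neighbours[OF wg lf] by force
  then obtain y where y: "b x y > 0" by blast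
  from mp obtain n where "n \<ge> 1" and mp_n: "\<And>f. schr_op b V f x = 0 \<and>
      cmod (f x) = (SUP y\<in>comb_ball b n x. cmod (f y))
      \<longrightarrow> (\<forall>y\<in>comb_ball b n x. cmod (f x) = cmod (f y))"
    unfolding max_principle_at_def by blast
  define t where "t = (deg b x + V x) / deg b x"
  have t: "\<bar>t\<bar> < 1"
    using V_neg V_gt deg_pos unfolding t_def by (auto simp: abs_less_iff field_simps)
  define f where "f = (\<lambda>z. if z = x then (1::complex) else complex_of_real t)"
  have "schr_op b V f x = 0"
    unfolding f_def schr_op_bump[OF wg lf] t_def using deg_pos by (simp add: field_simps)
  moreover have "cmod (f x) = (SUP y\<in>comb_ball b n x. cmod (f y))"
    unfolding f_def
    by (rule cSup_eq_maximum[symmetric])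
      (use center_in_comb_ball[of x b n] t in \<open>auto intro!: image_eqI[of _ _ x]\<close>)
  ultimately have "\<forall>z\<in>comb_ball b n x. cmod (f x) = cmod (f z)"
    using mp_n by blast
  moreover have "y \<in> comb_ball b n x"
    using \<open>n \<ge> 1\<close> y by (rule neighbour_in_comb_ball)
  ultimately have "cmod (f x) = cmod (f y)" by (rule bspec)
  moreover have "y \<noteq> x"
    using y weighted_graph_no_loop[OF wg] by auto
  then have "cmod (f x) = 1" "cmod (f y) = \<bar>t\<bar>"
    by (simp_all add: f_def)
  ultimately show False
    using t by linarith
qed

theorem proposition4p6:
  fixes b :: "'a::countable \<Rightarrow> 'a \<Rightarrow> real" and V :: "'a \<Rightarrow> real" and x :: 'a
  assumes "weighted_graph b" and "locally_finite_graph b"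
  shows "max_principle_at b (schr_op b V) x \<longleftrightarrow> (V x \<ge> 0 \<or> V x + 2 * deg b x \<le> 0)"
  using max_principle_at_schr_op_if[OF assms] max_principle_at_schr_op_only_if[OF assms]
  by blast

end
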